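(* Let $F\in\mathbb{R}^{K\times n}$ be a class indicator matrix, let $W\in\mathbb{R}^{r\times n}$ ($r\le n$) be an entrywise nonnegative similarity matrix with all column sums positive, $S=\operatorname{diag}(\mathbf{1}^TW)$, and $\tilde W=WS^{-1}$. Assume $\tilde W$ has full row rank $r$ and let $X^*=F\tilde W^T(\tilde W\tilde W^T)^{-1}$. Then each column of $X^*$ sums to one: $\mathbf{1}^TX^*=\mathbf{1}^T$.
   Context: $\mathbf{1}$ denotes the all-ones vector of appropriate length. The columns of $F$ are standard basis vectors $e_k\in\mathbb{R}^K$, $F_j=e_k$ meaning training sample $j$ is in class $k$. $W_{ij}$ is the similarity (e.g. a Gaussian kernel value $\exp\{-\|G_i-A_j\|_2^2/(2\sigma^2)\}$) between the $i$th basis vector $G_i$ and the $j$th training sample $A_j$; thus each column of $\tilde W$ sums to one. $X^*$ is the minimizer of the normalized RBF network objective $\|F-X\tilde W\|_F^2$. *)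

theory Defs
  imports "HOL-Analysis.Analysis"
begin

definition colsum_diag :: "real^'n^'r \<Rightarrow> real^'n^'n" where
  "colsum_diag W = (\<chi> i j. if i = j then (\<Sum>l\<in>UNIV. W $ l $ j) else 0)"

end

theory Submission
  imports Defs
begin

text \<open>
  Every column of an indicator matrix and of the column-normalised matrix
  \<open>\<tilde>W = W S\<^sup>-\<^sup>1\<close> sums to one, i.e. \<open>\<one>\<^sup>T F = \<one>\<^sup>T = \<one>\<^sup>T \<tilde>W\<close>.  Hence
  \<open>\<one>\<^sup>T X\<^sup>* = \<one>\<^sup>T \<tilde>W \<tilde>W\<^sup>T (\<tilde>W \<tilde>W\<^sup>T)\<^sup>-\<^sup>1 = \<one>\<^sup>T\<close>, where the Gram matrix
  \<open>\<tilde>W \<tilde>W\<^sup>T\<close> is invertible because \<open>\<tilde>W\<close> has full row rank.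
\<close>

lemma matrix_inv_right:
  fixes A :: "'a::semiring_1^'n^'m"
  assumes "invertible A"
  shows "A ** matrix_inv A = mat 1"
proof -
  have "\<exists>A'. A ** A' = mat 1 \<and> A' ** A = mat 1"
    using assms by (simp add: invertible_def)
  from someI_ex[OF this] show ?thesis
    unfolding matrix_inv_def by blast
qed

lemma invertible_diagonal:
  fixes d :: "'n::finite \<Rightarrow> 'a::field"
  assumes "\<And>j. d j \<noteq> 0"
  shows "invertible (\<chi> i j. if i = j then d j else 0)"
proof -
  have "(\<Sum>l\<in>UNIV. (if i = l then d l else 0) * (if l = j then inverse (d j) else 0))
        = (\<Sum>l\<in>UNIV. if l = j then mat 1 $ i $ j else 0)" for i j :: 'n
    by (rule sum.cong) (auto simp: assms mat_def)
  then have "(\<chi> i j. if i = j then d j else 0) ** (\<chi> i j. if i = j then inverse (d j) else 0)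
        = (mat 1 :: 'a^'n^'n)"
    by (simp add: matrix_matrix_mult_def vec_eq_iff)
  then show ?thesis
    using invertible_right_inverse by blast
qed

lemma invertible_colsum_diag:
  assumes "\<And>j. (\<Sum>i\<in>UNIV. W $ i $ j) \<noteq> 0"
  shows "invertible (colsum_diag W)"
  unfolding colsum_diag_def by (rule invertible_diagonal) (rule assms)

lemma ones_vector_mult_colsum_diag:
  "(\<chi> i. 1) v* colsum_diag W = (\<chi> i. 1) v* W"
  by (simp add: vec_eq_iff vector_matrix_mult_def colsum_diag_def if_distrib cong: if_cong)

lemma ones_vector_mult_column_normalized:
  assumes "invertible (colsum_diag W)"
  shows "(\<chi> i. 1) v* (W ** matrix_inv (colsum_diag W)) = (\<chi> j. 1)"
proof -
  have "(\<chi> i. 1) v* (W ** matrix_inv (colsum_diag W))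
        = (\<chi> i. 1) v* (colsum_diag W ** matrix_inv (colsum_diag W))"
    by (simp only: vector_matrix_mul_assoc[symmetric] ones_vector_mult_colsum_diag)
  also have "\<dots> = (\<chi> j. 1)"
    by (simp add: matrix_inv_right[OF assms])
  finally show ?thesis .
qed

lemma ones_vector_mult_indicator:
  fixes F :: "'a::comm_semiring_1^'n^'k"
  assumes "\<And>j. \<exists>k. column j F = axis k 1"
  shows "(\<chi> i. 1) v* F = (\<chi> j. 1)"
proof -
  have "((\<chi> i. 1) v* F) $ j = 1" for j
  proof -
    obtain k where "column j F = axis k 1"
      using assms by blast
    then have "\<And>i. F $ i $ j = (if i = k then 1 else 0)"
      by (simp add: column_def axis_def vec_eq_iff)
    then show ?thesis
      by (simp add: vector_matrix_mult_def)
  qed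
  then show ?thesis
    by (simp add: vec_eq_iff)
qed

lemma invertible_gram:
  fixes T :: "real^'n^'r"
  assumes "rank T = CARD('r)"
  shows "invertible (T ** transpose T)"
proof -
  have inj: "inj ((*v) (transpose T))"
    using assms full_rank_injective[of "transpose T"] by (simp add: rank_transpose)
  have "x = 0" if "(T ** transpose T) *v x = 0" for x
  proof -
    have "inner (transpose T *v x) (transpose T *v x) = inner x ((T ** transpose T) *v x)"
      by (simp add: matrix_vector_mul_assoc[symmetric] dot_lmul_matrix)
    with that have "transpose T *v x = transpose T *v 0"
      by simp
    with inj show ?thesis
      by (meson injD)
  qed
  then show ?thesis
    using matrix_left_invertible_ker invertible_left_inverse by blast
qed

lemma vector_matrix_mult_least_squares:
  fixes F :: "real^'n^'k" and T :: "real^'n^'r"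
  assumes "x v* F = y v* T" and "invertible (T ** transpose T)"
  shows "x v* (F ** transpose T ** matrix_inv (T ** transpose T)) = y"
proof -
  have "x v* (F ** transpose T ** matrix_inv (T ** transpose T))
        = ((x v* F) v* transpose T) v* matrix_inv (T ** transpose T)"
    by (simp only: vector_matrix_mul_assoc)
  also have "\<dots> = y v* (T ** transpose T ** matrix_inv (T ** transpose T))"
    by (simp only: assms(1) vector_matrix_mul_assoc)
  also have "\<dots> = y"
    by (simp add: matrix_inv_right[OF assms(2)])
  finally show ?thesis .
qed

theorem lemma1:
  fixes F :: "real^'n^'k" and W :: "real^'n^'r"
  assumes indicator: "\<forall>j. \<exists>k. column j F = axis k 1"
    and r_le_n: "CARD('r) \<le> CARD('n)"
    and nonneg: "\<forall>i j. W $ i $ j \<ge> 0"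
    and colpos: "\<forall>j. (\<Sum>i\<in>UNIV. W $ i $ j) > 0"
    and full_rank: "rank (W ** matrix_inv (colsum_diag W)) = CARD('r)"
  shows "(\<chi> i. 1) v* (F ** transpose (W ** matrix_inv (colsum_diag W))
           ** matrix_inv ((W ** matrix_inv (colsum_diag W))
                          ** transpose (W ** matrix_inv (colsum_diag W))))
         = (\<chi> j. 1)"
proof -
  define T where "T = W ** matrix_inv (colsum_diag W)"
  have "invertible (colsum_diag W)"
    using colpos by (simp add: invertible_colsum_diag less_imp_neq[symmetric])
  then have "(\<chi> i. 1) v* T = (\<chi> j. 1)"
    unfolding T_def by (rule ones_vector_mult_column_normalized)
  moreover have "(\<chi> i. 1) v* F = (\<chi> j. 1)"
    using indicator by (simp add: ones_vector_mult_indicator)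
  moreover have "invertible (T ** transpose T)"
    using full_rank unfolding T_def by (rule invertible_gram)
  ultimately have "(\<chi> i. 1) v* (F ** transpose T ** matrix_inv (T ** transpose T)) = (\<chi> j. 1)"
    by (simp add: vector_matrix_mult_least_squares)
  then show ?thesis
    unfolding T_def .
qed

end
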